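(* Let $F$, $H$, $X$, $\Omega$, $Q$ and the sequences generated by the IneIREG method be as described in the context, and assume $H$ is $\mu$-strongly monotone for some $\mu>0$. Let $\varepsilon>0$, let $\mathcal D_0>\varepsilon$ satisfy $\mathcal D_0\ge\overline\lambda C_HD_X/\underline\lambda$, and suppose $\eta_k\equiv\eta:=\varepsilon/(2\mathcal D_0)$ for all $k\ge0$; $\lambda_k\in[\underline\lambda,\overline\lambda]$ for all $k\ge0$ with $0<\underline\lambda\le\overline\lambda<1/L$, where $L:=L_F+\eta L_H$; and $\alpha_0\in[0,1]$ and $\alpha_{k+1}\le(1-\beta_k)\alpha_k$ for all $k\ge0$, where $\beta_k:=\big(\frac{1}{1-\lambda_k^2L^2}+\frac{1}{2\lambda_k\eta\mu}\big)^{-1}$. Define $p_{-1}:=1$, $p_k:=\big(\prod_{i=0}^k(1-\beta_i)\big)^{-1}$ for $k\ge0$, and for $k\ge1$, $\Lambda_k:=\sum_{j=0}^{k-1}\lambda_j\eta p_j$ and $\overline y_k:=\Lambda_k^{-1}\sum_{j=0}^{k-1}\lambda_j\eta p_jy_j$. Then for all $k\ge1$ satisfying $$k\ge\Big\lceil\Big(\frac{1}{1-\overline\lambda^2L^2}+\frac{\mathcal D_0}{\underline\lambda\mu\varepsilon}\Big)\log\Big(\frac{2(k+1)D_X^2\mathcal D_0}{\underline\lambda\varepsilon^2}\Big)\Big\rceil$$ we have $-B_H\,\mathrm{dist}(\overline y_k,Q)\le\mathrm{Gap}(\overline y_k,H,Q)\le\varepsilon$ and $0\le\mathrm{Gap}(\overline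 y_k,F,X)\le\varepsilon$; moreover, if $Q$ is $\sigma$-weakly sharp of order $\mathcal M\ge1$, then $\mathrm{Gap}(\overline y_k,H,Q)\ge-\big(B_H/\sigma^{1/\mathcal M}\big)\varepsilon^{1/\mathcal M}$ for such $k$.
   Context: Work in $\mathbb{R}^n$ with Euclidean inner product $\langle\cdot,\cdot\rangle$ and norm $\|\cdot\|$. The maps $F\colon \mathrm{Dom}\,F\to\mathbb{R}^n$ and $H\colon\mathrm{Dom}\,H\to\mathbb{R}^n$ are monotone and Lipschitz continuous with constants $L_F>0$ and $L_H>0$; $H$ is $\mu$-strongly monotone means $\langle H(x)-H(y),x-y\rangle\ge\mu\|x-y\|^2$ for all $x,y\in\mathrm{Dom}\,H$. $X$ is a nonempty compact convex set and $\Omega$ a nonempty closed convex set with $X\subset\Omega\subset\mathrm{Dom}\,F\cap\mathrm{Dom}\,H$; $P_X,P_\Omega$ denote orthogonal projections. $Q:=\{x\in X:\langle F(x),y-x\rangle\ge0\ \forall y\in X\}$ is assumed nonempty. $D_X:=\sup_{x,y\in X}\|x-y\|$, $C_H:=\sup_{x\in X}\|H(x)\|$, $B_H:=\sup_{x\in Q}\|H(x)\|$, $\mathrm{dist}(y,Q)$ is the Euclidean distance to $Q$. $\mathrm{Gap}(z,H,Q):=\sup_{x\in Q}\langle H(x),z-x\rangle$, $\mathrm{Gap}(z,F,X):=\sup_{x\in X}\langle F(x),z-x\rangle$. $Q$ is $\sigma$-weakly sharp of order $\mathcal M\ge1$ ($\sigma>0$) if $\langle F(x),y-x\rangle\ge\sigma\,\mathrm{dist}(y,Q)^{\mathcal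 M}$ for all $x\in Q$, $y\in X$. IneIREG method: start with $x_0=x_{-1}\in X$; for $k=0,1,\dots$, with parameters $\alpha_k\ge0$, $\lambda_k>0$, $\eta_k>0$, set $w_k=x_k+\alpha_k(x_k-x_{k-1})$, $w'_k=P_\Omega(w_k)$, $y_k=P_X\big(w_k-\lambda_k(F(w'_k)+\eta_kH(w'_k))\big)$, $x_{k+1}=P_X\big(w_k-\lambda_k(F(y_k)+\eta_kH(y_k))\big)$. *)

theory Defs
  imports "HOL-Analysis.Analysis"
begin

definition monotone_op :: "('a::real_inner \<Rightarrow> 'a) \<Rightarrow> 'a set \<Rightarrow> bool" where
  "monotone_op F S \<longleftrightarrow> (\<forall>x\<in>S. \<forall>y\<in>S. inner (F x - F y) (x - y) \<ge> 0)"

definition strongly_monotone_op :: "real \<Rightarrow> ('a::real_inner \<Rightarrow> 'a) \<Rightarrow> 'a set \<Rightarrow> bool" where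
  "strongly_monotone_op \<mu> H S \<longleftrightarrow>
     (\<forall>x\<in>S. \<forall>y\<in>S. inner (H x - H y) (x - y) \<ge> \<mu> * (norm (x - y))\<^sup>2)"

definition VI_sol :: "('a::real_inner \<Rightarrow> 'a) \<Rightarrow> 'a set \<Rightarrow> 'a set" where
  "VI_sol F X = {x \<in> X. \<forall>y\<in>X. inner (F x) (y - x) \<ge> 0}"

definition Gap :: "'a::real_inner \<Rightarrow> ('a \<Rightarrow> 'a) \<Rightarrow> 'a set \<Rightarrow> real" where
  "Gap z G S = (SUP x\<in>S. inner (G x) (z - x))"

definition weakly_sharp :: "real \<Rightarrow> real \<Rightarrow> ('a::real_inner \<Rightarrow> 'a) \<Rightarrow> 'a set \<Rightarrow> 'a set \<Rightarrow> bool" where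
  "weakly_sharp \<sigma> M F X Q \<longleftrightarrow>
     (\<forall>x\<in>Q. \<forall>y\<in>X. inner (F x) (y - x) \<ge> \<sigma> * (infdist y Q) powr M)"

end

(*
  Write G = F + eta H. Each IneIREG step is an extragradient step for G, which is L-Lipschitz on
  Omega and (eta mu)-strongly monotone on X; together with the harmonic-mean inequality this gives
  ||x_{k+1} - z||^2 <= (1 - beta_k) ||w_k - z||^2 - 2 lam_k <G z, y_k - z>  for every z in X,
  while the inertial extrapolation costs at most 3 alpha_k D_X^2. Multiplying step k by p_k makes
  these inequalities telescope (and alpha_k p_{k-1} <= alpha_0 <= 1), so the p-weighted sum of
  2 lam_j <G z, y_j - z> over j < k is at most (3k + 1) D_X^2. Since beta_j >= 1/C the weights grow
  like exp(k/C), and since beta_j < 2/3 they grow at most geometrically, so their sum is about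
  (3/2) p_{k-1}; for k beyond the stated bound this yields <G z, ybar_k - z> <= eta eps on X.
  Splitting G again: on Q the F-part is nonnegative, whence Gap(ybar_k, H, Q) <= eps; on X the
  H-part is at least -eta C_H D_X >= -eps/2, whence Gap(ybar_k, F, X) <= eps. The lower bounds
  follow from Cauchy-Schwarz and, under weak sharpness, from sigma dist(ybar_k, Q)^M <= Gap(ybar_k, F, X).
*)

theory Submission
  imports Defs
begin

section \<open>Monotone operators\<close>

lemma monotone_op_subset: "monotone_op F S \<Longrightarrow> T \<subseteq> S \<Longrightarrow> monotone_op F T"
  unfolding monotone_op_def by blast

lemma strongly_monotone_op_subset:
  "strongly_monotone_op \<mu> H S \<Longrightarrow> T \<subseteq> S \<Longrightarrow> strongly_monotone_op \<mu> H T"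
  unfolding strongly_monotone_op_def by blast

lemma strongly_monotone_op_add_scaleR:
  assumes "monotone_op F S" and "strongly_monotone_op \<mu> H S" and "0 \<le> \<eta>"
  shows "strongly_monotone_op (\<eta> * \<mu>) (\<lambda>z. F z + \<eta> *\<^sub>R H z) S"
  unfolding strongly_monotone_op_def
proof (intro ballI)
  fix u v assume "u \<in> S" "v \<in> S"
  then have "0 \<le> inner (F u - F v) (u - v)" and "\<mu> * (norm (u - v))\<^sup>2 \<le> inner (H u - H v) (u - v)"
    using assms(1,2) unfolding monotone_op_def strongly_monotone_op_def by blast+
  moreover have "inner ((F u + \<eta> *\<^sub>R H u) - (F v + \<eta> *\<^sub>R H v)) (u - v)
      = inner (F u - F v) (u - v) + \<eta> * inner (H u - H v) (u - v)"
    by (simp add: algebra_simps inner_diff_left inner_add_left)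
  ultimately show "\<eta> * \<mu> * (norm (u - v))\<^sup>2 \<le> inner ((F u + \<eta> *\<^sub>R H u) - (F v + \<eta> *\<^sub>R H v)) (u - v)"
    using mult_left_mono[OF _ assms(3)] by (smt (verit) mult.assoc)
qed

lemma strongly_monotone_op_le_lipschitz:
  assumes "strongly_monotone_op c G S" and "L-lipschitz_on S G"
    and "u \<in> S" "v \<in> S" "u \<noteq> v"
  shows "c \<le> L"
proof -
  have "c * (norm (u - v))\<^sup>2 \<le> inner (G u - G v) (u - v)"
    using assms(1,3,4) unfolding strongly_monotone_op_def by blast
  also have "\<dots> \<le> norm (G u - G v) * norm (u - v)"
    by (rule norm_cauchy_schwarz)
  also have "\<dots> \<le> L * norm (u - v) * norm (u - v)"
    using lipschitz_onD[OF assms(2,3,4)] by (intro mult_right_mono) (auto simp: dist_norm)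
  finally have "c * (norm (u - v))\<^sup>2 \<le> L * (norm (u - v))\<^sup>2"
    by (simp add: power2_eq_square algebra_simps)
  then show ?thesis
    using assms(5) by simp
qed

section \<open>One extragradient step\<close>

lemma inverse_sum_inverses_mult_square_le:
  fixes a b s t :: real
  assumes "0 < a" "0 < b"
  shows "inverse (1/a + 1/b) * (s + t)\<^sup>2 \<le> a * s\<^sup>2 + b * t\<^sup>2"
proof -
  have "inverse (1/a + 1/b) = a * b / (a + b)"
    using assms by (simp add: field_simps)
  moreover have "a * b * (s + t)\<^sup>2 \<le> (a + b) * (a * s\<^sup>2 + b * t\<^sup>2)"
    using zero_le_power2[of "a * s - b * t"] by (simp add: power2_eq_square algebra_simps)
  ultimately show ?thesis
    using assms by (simp add: field_simps)
qed

lemma extragradient_step_estimate: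
  fixes X :: "'a::euclidean_space set"
  assumes X: "convex X" "closed X" "X \<noteq> {}"
    and y: "y = closest_point X (w - lam *\<^sub>R g')"
    and x': "x' = closest_point X (w - lam *\<^sub>R g)"
    and lip: "norm (g - g') \<le> L * norm (w - y)"
    and "z \<in> X" and "0 < lam"
  shows "(norm (x' - z))\<^sup>2 \<le> (norm (w - z))\<^sup>2 - (1 - lam\<^sup>2 * L\<^sup>2) * (norm (w - y))\<^sup>2
           - 2 * lam * inner g (y - z)"
proof -
  have "x' \<in> X"
    using x' closest_point_in_set[OF X(2,3)] by simp
  have proj_x': "inner (w - lam *\<^sub>R g - x') (z - x') \<le> 0"
    using closest_point_dot[OF X(1,2) \<open>z \<in> X\<close>] x' by simp
  have proj_y: "inner (w - lam *\<^sub>R g' - y) (x' - y) \<le> 0"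
    using closest_point_dot[OF X(1,2) \<open>x' \<in> X\<close>] y by simp
  have "inner (g - g') (y - x') \<le> norm (g - g') * norm (y - x')"
    by (rule norm_cauchy_schwarz)
  also have "\<dots> \<le> L * norm (w - y) * norm (y - x')"
    by (rule mult_right_mono[OF lip]) simp
  finally have "2 * lam * inner (g - g') (y - x') \<le> 2 * lam * (L * norm (w - y) * norm (y - x'))"
    using \<open>0 < lam\<close> by simp
  moreover have "2 * lam * (L * norm (w - y) * norm (y - x'))
      \<le> (norm (y - x'))\<^sup>2 + lam\<^sup>2 * L\<^sup>2 * (norm (w - y))\<^sup>2"
    using zero_le_power2[of "norm (y - x') - lam * L * norm (w - y)"]
    by (simp add: power2_eq_square algebra_simps)
  moreover have "(norm (x' - z))\<^sup>2 = (norm (w - z))\<^sup>2 - (norm (w - y))\<^sup>2 - (norm (y - x'))\<^sup>2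
      - 2 * inner (w - y) (y - x') + 2 * inner (w - x') (z - x')"
    by (simp add: power2_norm_eq_inner inner_commute algebra_simps)
  ultimately show ?thesis
    using proj_x' proj_y
    by (simp add: inner_commute algebra_simps)
qed

lemma extragradient_step_contraction:
  fixes G :: "'a::euclidean_space \<Rightarrow> 'a"
  assumes X: "convex X" "closed X" "X \<noteq> {}"
    and \<Omega>: "convex \<Omega>" "closed \<Omega>" "X \<subseteq> \<Omega>"
    and G_lip: "L-lipschitz_on \<Omega> G" and G_strong: "strongly_monotone_op c G X" and "0 < c"
    and lam: "0 < lam" "lam * L < 1"
    and w': "w' = closest_point \<Omega> w"
    and y: "y = closest_point X (w - lam *\<^sub>R G w')"
    and x': "x' = closest_point X (w - lam *\<^sub>R G y)"
    and "z \<in> X"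
  shows "(norm (x' - z))\<^sup>2 \<le> (1 - inverse (1 / (1 - lam\<^sup>2 * L\<^sup>2) + 1 / (2 * lam * c))) * (norm (w - z))\<^sup>2
           - 2 * lam * inner (G z) (y - z)"
proof -
  have "y \<in> X"
    using y closest_point_in_set[OF X(2,3)] by simp
  then have "y \<in> \<Omega>"
    using \<Omega>(3) by blast
  have "w' \<in> \<Omega>"
    using w' closest_point_in_set[OF \<Omega>(2)] X(3) \<Omega>(3) by blast
  have "norm (w' - y) \<le> norm (w - y)"
    using closest_point_lipschitz[OF \<Omega>(1,2), of w y] closest_point_self[OF \<open>y \<in> \<Omega>\<close>] X(3) \<Omega>(3) w'
    by (auto simp: dist_norm)
  have "norm (G y - G w') \<le> L * norm (w' - y)"
    using lipschitz_onD[OF G_lip \<open>y \<in> \<Omega>\<close> \<open>w' \<in> \<Omega>\<close>] by (simp add: dist_norm norm_minus_commute)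
  also have "\<dots> \<le> L * norm (w - y)"
    using \<open>norm (w' - y) \<le> norm (w - y)\<close> lipschitz_on_nonneg[OF G_lip] by (rule mult_left_mono)
  finally have step: "(norm (x' - z))\<^sup>2 \<le> (norm (w - z))\<^sup>2 - (1 - lam\<^sup>2 * L\<^sup>2) * (norm (w - y))\<^sup>2
           - 2 * lam * inner (G y) (y - z)"
    by (rule extragradient_step_estimate[OF X y x' _ \<open>z \<in> X\<close> lam(1)])
  have "c * (norm (y - z))\<^sup>2 \<le> inner (G y - G z) (y - z)"
    using G_strong \<open>y \<in> X\<close> \<open>z \<in> X\<close> unfolding strongly_monotone_op_def by blast
  then have strong: "2 * lam * (c * (norm (y - z))\<^sup>2 + inner (G z) (y - z)) \<le> 2 * lam * inner (G y) (y - z)"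
    using lam(1) by (simp add: inner_diff_left)
  have "0 \<le> lam * L"
    using lam(1) lipschitz_on_nonneg[OF G_lip] by simp
  then have "0 < 1 - lam\<^sup>2 * L\<^sup>2"
    using lam(2) by (simp add: power_mult_distrib[symmetric] power_less_one_iff)
  have "(norm (w - z))\<^sup>2 \<le> (norm (w - y) + norm (y - z))\<^sup>2"
    using norm_triangle_ineq[of "w - y" "y - z"] by (intro power_mono) auto
  then have "inverse (1 / (1 - lam\<^sup>2 * L\<^sup>2) + 1 / (2 * lam * c)) * (norm (w - z))\<^sup>2
      \<le> inverse (1 / (1 - lam\<^sup>2 * L\<^sup>2) + 1 / (2 * lam * c)) * (norm (w - y) + norm (y - z))\<^sup>2"
    using \<open>0 < 1 - lam\<^sup>2 * L\<^sup>2\<close> lam(1) \<open>0 < c\<close> by (intro mult_left_mono) auto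
  also have "\<dots> \<le> (1 - lam\<^sup>2 * L\<^sup>2) * (norm (w - y))\<^sup>2 + (2 * lam * c) * (norm (y - z))\<^sup>2"
    using \<open>0 < 1 - lam\<^sup>2 * L\<^sup>2\<close> lam(1) \<open>0 < c\<close> by (intro inverse_sum_inverses_mult_square_le) auto
  finally show ?thesis
    using step strong
    by (simp add: algebra_simps)
qed

lemma norm_extrapolation_le:
  fixes x x' z :: "'a::real_normed_vector"
  assumes "0 \<le> a" "a \<le> 1" "norm (x - z) \<le> D" "norm (x - x') \<le> D"
  shows "(norm (x + a *\<^sub>R (x - x') - z))\<^sup>2 \<le> (norm (x - z))\<^sup>2 + 3 * a * D\<^sup>2"
proof -
  have "norm (x + a *\<^sub>R (x - x') - z) = norm ((x - z) + a *\<^sub>R (x - x'))"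
    by (simp add: algebra_simps)
  also have "\<dots> \<le> norm (x - z) + a * norm (x - x')"
    using norm_triangle_ineq[of "x - z" "a *\<^sub>R (x - x')"] assms(1) by simp
  finally have "(norm (x + a *\<^sub>R (x - x') - z))\<^sup>2 \<le> (norm (x - z) + a * norm (x - x'))\<^sup>2"
    by (rule power_mono) simp
  also have "\<dots> = (norm (x - z))\<^sup>2 + 2 * a * (norm (x - z) * norm (x - x')) + a * (a * (norm (x - x'))\<^sup>2)"
    by (simp add: power2_eq_square algebra_simps)
  also have "\<dots> \<le> (norm (x - z))\<^sup>2 + 2 * a * (D * D) + a * (1 * D\<^sup>2)"
    using assms norm_ge_zero[of "x - z"] order_trans[OF norm_ge_zero assms(3)]
    by (intro add_mono mult_left_mono mult_mono power_mono) auto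
  finally show ?thesis
    by (simp add: power2_eq_square algebra_simps)
qed

lemma prod_one_minus_le_exp:
  fixes b :: "'i \<Rightarrow> real"
  assumes "\<And>i. i \<in> A \<Longrightarrow> d \<le> b i \<and> b i \<le> 1"
  shows "(\<Prod>i\<in>A. 1 - b i) \<le> exp (- d * card A)"
proof (cases "finite A")
  case True
  have "(\<Prod>i\<in>A. 1 - b i) \<le> (\<Prod>i\<in>A. exp (- d))"
    using assms by (intro prod_mono) (smt (verit) exp_ge_add_one_self)
  also have "\<dots> = exp (- d * card A)"
    using True by (simp add: exp_of_nat_mult[symmetric] mult.commute)
  finally show ?thesis .
qed simp

lemma sum_ge_of_ratio_le_3:
  fixes q :: "nat \<Rightarrow> real"
  assumes "\<And>j. 0 < q j" and "\<And>j. q (Suc j) \<le> 3 * q j"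
  shows "(3 - 1 / real (Suc m)) * q m \<le> 2 * (\<Sum>j<Suc m. q j)"
proof (induction m)
  case (Suc m)
  have "(3 - 1 / real (Suc (Suc m))) * q (Suc m) \<le> (3 - 1 / real (Suc m)) * (q (Suc m) / 3) + 2 * q (Suc m)"
  proof -
    have "3 - 1 / real (Suc (Suc m)) \<le> (3 - 1 / real (Suc m)) / 3 + 2"
      by (simp add: field_simps)
    then show ?thesis
      using assms(1)[of "Suc m"] by (simp add: field_simps mult_right_mono)
  qed
  also have "\<dots> \<le> (3 - 1 / real (Suc m)) * q m + 2 * q (Suc m)"
    using assms(2)[of m] by (intro add_mono mult_left_mono) (auto simp: field_simps)
  also have "\<dots> \<le> 2 * (\<Sum>j<Suc (Suc m). q j)"
    using Suc by simp
  finally show ?case .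
qed simp

section \<open>Weighted means and gap functions\<close>

lemma weighted_mean_in_convex:
  fixes y :: "'i \<Rightarrow> 'a::real_vector"
  assumes "convex S" "finite A" "0 < sum \<omega> A" "\<And>j. j \<in> A \<Longrightarrow> 0 \<le> \<omega> j \<and> y j \<in> S"
  shows "inverse (sum \<omega> A) *\<^sub>R (\<Sum>j\<in>A. \<omega> j *\<^sub>R y j) \<in> S"
proof -
  have "inverse (sum \<omega> A) *\<^sub>R (\<Sum>j\<in>A. \<omega> j *\<^sub>R y j) = (\<Sum>j\<in>A. (\<omega> j / sum \<omega> A) *\<^sub>R y j)"
    by (simp add: scaleR_sum_right divide_inverse mult.commute)
  also have "\<dots> \<in> S"
    using assms by (intro convex_sum) (auto simp: sum_divide_distrib[symmetric])
  finally show ?thesis .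
qed

lemma inner_weighted_mean_diff:
  fixes y :: "'i \<Rightarrow> 'a::real_inner"
  assumes "sum \<omega> A \<noteq> 0"
  shows "sum \<omega> A * inner g (inverse (sum \<omega> A) *\<^sub>R (\<Sum>j\<in>A. \<omega> j *\<^sub>R y j) - z)
    = (\<Sum>j\<in>A. \<omega> j * inner g (y j - z))"
proof -
  have "sum \<omega> A *\<^sub>R (inverse (sum \<omega> A) *\<^sub>R (\<Sum>j\<in>A. \<omega> j *\<^sub>R y j) - z) = (\<Sum>j\<in>A. \<omega> j *\<^sub>R (y j - z))"
    using assms by (simp add: scaleR_diff_right scaleR_sum_left sum_subtractf)
  then have "inner g (sum \<omega> A *\<^sub>R (inverse (sum \<omega> A) *\<^sub>R (\<Sum>j\<in>A. \<omega> j *\<^sub>R y j) - z))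
      = inner g (\<Sum>j\<in>A. \<omega> j *\<^sub>R (y j - z))"
    by (rule arg_cong)
  then show ?thesis
    by (simp add: inner_sum_right)
qed

lemma weighted_mean_scale:
  fixes y :: "'i \<Rightarrow> 'a::real_vector"
  assumes "s \<noteq> 0"
  shows "inverse (\<Sum>j\<in>A. s * \<omega> j) *\<^sub>R (\<Sum>j\<in>A. (s * \<omega> j) *\<^sub>R y j)
    = inverse (sum \<omega> A) *\<^sub>R (\<Sum>j\<in>A. \<omega> j *\<^sub>R y j)"
proof -
  have "(\<Sum>j\<in>A. (s * \<omega> j) *\<^sub>R y j) = s *\<^sub>R (\<Sum>j\<in>A. \<omega> j *\<^sub>R y j)"
    by (simp add: scaleR_sum_right)
  then show ?thesis
    using assms by (simp add: sum_distrib_left[symmetric])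
qed

lemma Gap_le:
  assumes "S \<noteq> {}" "\<And>z. z \<in> S \<Longrightarrow> inner (G z) (u - z) \<le> c"
  shows "Gap u G S \<le> c"
  unfolding Gap_def using assms by (intro cSUP_least) auto

lemma inner_le_Gap:
  assumes "z \<in> S" "\<And>z. z \<in> S \<Longrightarrow> inner (G z) (u - z) \<le> c"
  shows "inner (G z) (u - z) \<le> Gap u G S"
  unfolding Gap_def using assms by (intro cSUP_upper bdd_aboveI2) auto

lemma Gap_nonneg:
  assumes "u \<in> S" "\<And>z. z \<in> S \<Longrightarrow> inner (G z) (u - z) \<le> c"
  shows "0 \<le> Gap u G S"
  using inner_le_Gap[OF assms] by simp

lemma neg_infdist_le_Gap:
  fixes H :: "'a::real_inner \<Rightarrow> 'a"
  assumes "Q \<noteq> {}" and H: "\<And>z. z \<in> Q \<Longrightarrow> norm (H z) \<le> B"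
    and bdd: "\<And>z. z \<in> Q \<Longrightarrow> inner (H z) (u - z) \<le> c"
  shows "- B * infdist u Q \<le> Gap u H Q"
proof -
  have pointwise: "- B * dist u z \<le> Gap u H Q" if "z \<in> Q" for z
  proof -
    have "- B * dist u z \<le> - (norm (H z) * norm (u - z))"
      using H[OF that] by (simp add: dist_norm mult_right_mono)
    also have "\<dots> \<le> inner (H z) (u - z)"
      using norm_cauchy_schwarz[of "- H z" "u - z"] by simp
    also have "\<dots> \<le> Gap u H Q"
      using inner_le_Gap[OF that bdd] .
    finally show ?thesis .
  qed
  obtain z where "z \<in> Q"
    using assms(1) by blast
  then have "0 \<le> B"
    using H norm_ge_zero order_trans by blast
  show ?thesis
  proof (cases "B = 0")
    case True
    then show ?thesis
      using pointwise[OF \<open>z \<in> Q\<close>] by simp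
  next
    case False
    then have "- Gap u H Q / B \<le> dist u z" if "z \<in> Q" for z
      using pointwise[OF that] \<open>0 \<le> B\<close> by (simp add: field_simps)
    then have "- Gap u H Q / B \<le> infdist u Q"
      unfolding infdist_notempty[OF assms(1)] using assms(1) by (intro cINF_greatest) auto
    then show ?thesis
      using False \<open>0 \<le> B\<close> by (simp add: field_simps)
  qed
qed

lemma infdist_le_of_weakly_sharp:
  assumes "weakly_sharp \<sigma> M F X Q" "0 < \<sigma>" "1 \<le> M"
    and "u \<in> X" "z \<in> Q" "inner (F z) (u - z) \<le> \<epsilon>"
  shows "infdist u Q \<le> \<epsilon> powr (1 / M) / \<sigma> powr (1 / M)"
proof -
  have "\<sigma> * infdist u Q powr M \<le> inner (F z) (u - z)"
    using assms(1,4,5) unfolding weakly_sharp_def by blast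
  also have "\<dots> \<le> \<epsilon>"
    by fact
  finally have "\<sigma> * infdist u Q powr M \<le> \<epsilon>" .
  then have "infdist u Q powr M \<le> \<epsilon> / \<sigma>"
    using \<open>0 < \<sigma>\<close> by (simp add: field_simps mult.commute)
  then have "(infdist u Q powr M) powr (1 / M) \<le> (\<epsilon> / \<sigma>) powr (1 / M)"
    using \<open>1 \<le> M\<close> by (intro powr_mono2) auto
  then show ?thesis
    using \<open>1 \<le> M\<close> infdist_nonneg[of u Q] by (simp add: powr_powr powr_divide)
qed

lemma regularized_solution_inner_le:
  fixes F H :: "'a::real_inner \<Rightarrow> 'a"
  assumes "u \<in> X" and "bounded X" and "bounded (H ` X)"
    and H_diam: "(SUP z\<in>X. norm (H z)) * diameter X \<le> D0"
    and "0 < \<epsilon>" "\<epsilon> < D0" and \<eta>: "\<eta> = \<epsilon> / (2 * D0)"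
    and sol: "\<And>z. z \<in> X \<Longrightarrow> inner (F z + \<eta> *\<^sub>R H z) (u - z) \<le> \<eta> * \<epsilon>"
  shows "\<And>z. z \<in> VI_sol F X \<Longrightarrow> inner (H z) (u - z) \<le> \<epsilon>"
    and "\<And>z. z \<in> X \<Longrightarrow> inner (F z) (u - z) \<le> \<epsilon>"
proof -
  have "0 < D0"
    using \<open>0 < \<epsilon>\<close> \<open>\<epsilon> < D0\<close> by linarith
  then have "0 < \<eta>" and "\<eta> * D0 = \<epsilon> / 2" and "\<eta> \<le> 1 / 2"
    using \<eta> \<open>0 < \<epsilon>\<close> \<open>\<epsilon> < D0\<close> by simp_all
  then have "\<eta> * \<epsilon> \<le> \<epsilon> / 2"
    using mult_right_mono[of \<eta> "1 / 2" \<epsilon>] \<open>0 < \<epsilon>\<close> by simp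
  have split: "inner (F z) (u - z) + \<eta> * inner (H z) (u - z) \<le> \<eta> * \<epsilon>" if "z \<in> X" for z
    using sol[OF that] by (simp add: inner_add_left)
  show "inner (H z) (u - z) \<le> \<epsilon>" if "z \<in> VI_sol F X" for z
  proof -
    have "z \<in> X" and "0 \<le> inner (F z) (u - z)"
      using that \<open>u \<in> X\<close> unfolding VI_sol_def by auto
    then have "\<eta> * inner (H z) (u - z) \<le> \<eta> * \<epsilon>"
      using split[OF \<open>z \<in> X\<close>] by linarith
    then show ?thesis
      using \<open>0 < \<eta>\<close> by simp
  qed
  show "inner (F z) (u - z) \<le> \<epsilon>" if "z \<in> X" for z
  proof -
    have "norm (H z) \<le> (SUP z\<in>X. norm (H z))"
      using that \<open>bounded (H ` X)\<close> bdd_above_norm[of "H ` X"] by (intro cSUP_upper) (auto simp: image_comp)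
    moreover have "norm (u - z) \<le> diameter X"
      using diameter_bounded_bound[OF \<open>bounded X\<close> \<open>u \<in> X\<close> that] by (simp add: dist_norm)
    ultimately have "norm (H z) * norm (u - z) \<le> (SUP z\<in>X. norm (H z)) * diameter X"
      using order_trans[OF norm_ge_zero] by (intro mult_mono) auto
    with H_diam have "- inner (H z) (u - z) \<le> D0"
      using norm_cauchy_schwarz[of "- H z" "u - z"] by simp
    then have "- (\<eta> * inner (H z) (u - z)) \<le> \<eta> * D0"
      using mult_left_mono[of "- inner (H z) (u - z)" D0 \<eta>] \<open>0 < \<eta>\<close> by simp
    then show ?thesis
      using split[OF that] \<open>\<eta> * D0 = \<epsilon> / 2\<close> \<open>\<eta> * \<epsilon> \<le> \<epsilon> / 2\<close> by linarith
  qed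
qed

lemma regularized_solution_gap_bounds:
  fixes F H :: "'a::real_inner \<Rightarrow> 'a"
  assumes u: "u \<in> X" and X: "bounded X" and H: "bounded (H ` X)" and Q_ne: "VI_sol F X \<noteq> {}"
    and H_diam: "(SUP z\<in>X. norm (H z)) * diameter X \<le> D0"
    and \<epsilon>: "0 < \<epsilon>" "\<epsilon> < D0" and \<eta>: "\<eta> = \<epsilon> / (2 * D0)"
    and sol: "\<And>z. z \<in> X \<Longrightarrow> inner (F z + \<eta> *\<^sub>R H z) (u - z) \<le> \<eta> * \<epsilon>"
  shows "- (SUP z\<in>VI_sol F X. norm (H z)) * infdist u (VI_sol F X) \<le> Gap u H (VI_sol F X)
      \<and> Gap u H (VI_sol F X) \<le> \<epsilon> \<and> 0 \<le> Gap u F X \<and> Gap u F X \<le> \<epsilon>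
      \<and> (\<forall>\<sigma> M. \<sigma> > 0 \<and> M \<ge> 1 \<and> weakly_sharp \<sigma> M F X (VI_sol F X) \<longrightarrow>
           Gap u H (VI_sol F X) \<ge> - ((SUP z\<in>VI_sol F X. norm (H z)) / \<sigma> powr (1 / M)) * \<epsilon> powr (1 / M))"
proof -
  define Q where "Q = VI_sol F X"
  define BH where "BH = (SUP z\<in>Q. norm (H z))"
  note inner_le = regularized_solution_inner_le[OF u X H H_diam \<epsilon> \<eta> sol, folded Q_def]
  have "Q \<noteq> {}" "Q \<subseteq> X"
    using Q_ne unfolding Q_def VI_sol_def by auto
  have BH: "norm (H z) \<le> BH" if "z \<in> Q" for z
    unfolding BH_def using that bounded_subset[OF H image_mono[OF \<open>Q \<subseteq> X\<close>]] bdd_above_norm[of "H ` Q"]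
    by (intro cSUP_upper) (auto simp: image_comp)
  have H_lower: "- BH * infdist u Q \<le> Gap u H Q"
    by (rule neg_infdist_le_Gap[OF \<open>Q \<noteq> {}\<close> BH inner_le(1)])
  have "- (BH / \<sigma> powr (1 / M)) * \<epsilon> powr (1 / M) \<le> Gap u H Q"
    if "0 < \<sigma>" "1 \<le> M" "weakly_sharp \<sigma> M F X Q" for \<sigma> M
  proof -
    obtain z where "z \<in> Q"
      using \<open>Q \<noteq> {}\<close> by blast
    then have "infdist u Q \<le> \<epsilon> powr (1 / M) / \<sigma> powr (1 / M)"
      using \<open>Q \<subseteq> X\<close> inner_le(2) by (intro infdist_le_of_weakly_sharp[OF that(3,1,2) u]) auto
    moreover have "0 \<le> BH"
      using BH[OF \<open>z \<in> Q\<close>] norm_ge_zero order_trans by blast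
    ultimately have "BH * infdist u Q \<le> BH * (\<epsilon> powr (1 / M) / \<sigma> powr (1 / M))"
      by (rule mult_left_mono)
    then have "- (BH / \<sigma> powr (1 / M)) * \<epsilon> powr (1 / M) \<le> - BH * infdist u Q"
      by simp
    with H_lower show ?thesis
      by linarith
  qed
  moreover have "Gap u H Q \<le> \<epsilon>"
    by (rule Gap_le[OF \<open>Q \<noteq> {}\<close> inner_le(1)])
  moreover have "0 \<le> Gap u F X"
    by (rule Gap_nonneg[OF u inner_le(2)])
  moreover have "Gap u F X \<le> \<epsilon>"
    using u by (intro Gap_le inner_le(2)) auto
  ultimately show ?thesis
    using H_lower unfolding Q_def[symmetric] BH_def[symmetric] by blast
qed

section \<open>The inertial extragradient iteration\<close>

locale inertial_extragradient =
  fixes G :: "'a::euclidean_space \<Rightarrow> 'a"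
    and X \<Omega> :: "'a set"
    and L c lam_lo lam_hi :: real
    and lam alpha :: "nat \<Rightarrow> real"
    and x w w' y :: "nat \<Rightarrow> 'a"
  assumes X_ne: "X \<noteq> {}" and X_compact: "compact X" and X_convex: "convex X"
    and Om_closed: "closed \<Omega>" and Om_convex: "convex \<Omega>" and X_sub: "X \<subseteq> \<Omega>"
    and G_lip: "L-lipschitz_on \<Omega> G"
    and G_strong: "strongly_monotone_op c G X" and c_pos: "0 < c"
    and lam_bounds: "\<And>k. lam_lo \<le> lam k \<and> lam k \<le> lam_hi"
    and lam_lo_pos: "0 < lam_lo" and lam_hi_L: "lam_hi * L < 1"
    and alpha_nonneg: "\<And>k. 0 \<le> alpha k" and alpha0: "alpha 0 \<le> 1"
    and alpha_Suc: "\<And>k. alpha (Suc k) \<le>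
          (1 - inverse (1 / (1 - (lam k)\<^sup>2 * L\<^sup>2) + 1 / (2 * lam k * c))) * alpha k"
    and x0: "x 0 \<in> X"
    and w_def: "\<And>k. w k = x k + alpha k *\<^sub>R (x k - (if k = 0 then x 0 else x (k - 1)))"
    and w'_def: "\<And>k. w' k = closest_point \<Omega> (w k)"
    and y_def: "\<And>k. y k = closest_point X (w k - lam k *\<^sub>R G (w' k))"
    and x_Suc: "\<And>k. x (Suc k) = closest_point X (w k - lam k *\<^sub>R G (y k))"
begin

definition beta :: "nat \<Rightarrow> real" where
  "beta k = inverse (1 / (1 - (lam k)\<^sup>2 * L\<^sup>2) + 1 / (2 * lam k * c))"

definition p :: "nat \<Rightarrow> real" where
  "p k = inverse (\<Prod>i\<le>k. 1 - beta i)"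

text \<open>\<open>P k\<close> is the paper's \<open>p\<^sub>k\<^sub>-\<^sub>1\<close>, with \<open>p\<^sub>-\<^sub>1 = 1\<close>.\<close>
definition P :: "nat \<Rightarrow> real" where
  "P k = inverse (\<Prod>i<k. 1 - beta i)"

definition ybar :: "nat \<Rightarrow> 'a" where
  "ybar k = inverse (\<Sum>j<k. lam j * p j) *\<^sub>R (\<Sum>j<k. (lam j * p j) *\<^sub>R y j)"

lemma L_nonneg: "0 \<le> L"
  using lipschitz_on_nonneg[OF G_lip] .

lemma lam_pos: "0 < lam k"
  using lam_bounds[of k] lam_lo_pos by linarith

lemma lam_L: "lam k * L < 1"
  using mult_right_mono[OF conjunct2[OF lam_bounds[of k]] L_nonneg] lam_hi_L by linarith

lemma one_minus_square_L_pos: "0 \<le> t \<Longrightarrow> t * L < 1 \<Longrightarrow> 0 < 1 - t\<^sup>2 * L\<^sup>2"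
  using L_nonneg by (simp add: power_mult_distrib[symmetric] power_less_one_iff)

lemma one_minus_lam_L_pos: "0 < 1 - (lam k)\<^sup>2 * L\<^sup>2"
  using lam_pos[of k] lam_L[of k] by (intro one_minus_square_L_pos) auto

lemma one_le_inverse_one_minus_lam_L: "1 \<le> 1 / (1 - (lam k)\<^sup>2 * L\<^sup>2)"
  using one_minus_lam_L_pos[of k] by (simp add: field_simps)

lemma beta_pos: "0 < beta k"
proof -
  have "0 < 1 / (1 - (lam k)\<^sup>2 * L\<^sup>2) + 1 / (2 * lam k * c)"
    using one_minus_lam_L_pos[of k] lam_pos[of k] c_pos by (intro add_pos_pos) auto
  then show ?thesis
    unfolding beta_def by simp
qed

lemma beta_lt_1: "beta k < 1"
proof -
  have "0 < 1 / (2 * lam k * c)"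
    using lam_pos[of k] c_pos by simp
  then have "1 < 1 / (1 - (lam k)\<^sup>2 * L\<^sup>2) + 1 / (2 * lam k * c)"
    using one_le_inverse_one_minus_lam_L[of k] by linarith
  then show ?thesis
    unfolding beta_def by (simp add: inverse_less_1_iff)
qed

lemma prod_one_minus_beta_pos: "0 < (\<Prod>i\<in>A. 1 - beta i)"
  using beta_lt_1 by (intro prod_pos) auto

lemma P_pos: "0 < P k"
  unfolding P_def using prod_one_minus_beta_pos by simp

lemma one_le_P: "1 \<le> P k"
proof -
  have "(\<Prod>i<k. 1 - beta i) \<le> 1"
    using beta_pos beta_lt_1 by (intro prod_le_1) (auto simp: less_imp_le)
  then show ?thesis
    unfolding P_def using prod_one_minus_beta_pos by (simp add: one_le_inverse_iff)
qed

lemma P_Suc: "P (Suc k) = p k"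
  unfolding P_def p_def by (simp add: lessThan_Suc_atMost)

lemma p_pos: "0 < p k"
  using P_pos P_Suc by metis

lemma P_Suc_mult: "P (Suc k) * (1 - beta k) = P k"
  unfolding P_def using prod_one_minus_beta_pos[of "{..<k}"] beta_lt_1[of k]
  by (simp add: inverse_mult_distrib)

lemma x_in_X: "x k \<in> X"
  using x0 x_Suc closest_point_in_set[OF compact_imp_closed[OF X_compact] X_ne] by (cases k) auto

lemma y_in_X: "y k \<in> X"
  using y_def closest_point_in_set[OF compact_imp_closed[OF X_compact] X_ne] by simp

lemma norm_diff_le_diameter: "u \<in> X \<Longrightarrow> v \<in> X \<Longrightarrow> norm (u - v) \<le> diameter X"
  using diameter_bounded_bound[OF compact_imp_bounded[OF X_compact]] by (simp add: dist_norm)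

lemma alpha_mult_P_le: "alpha k * P k \<le> alpha 0"
proof (induction k)
  case (Suc k)
  have "alpha (Suc k) * P (Suc k) \<le> (1 - beta k) * alpha k * P (Suc k)"
    using alpha_Suc[of k] P_pos[of "Suc k"] unfolding beta_def by (simp add: mult_right_mono)
  also have "\<dots> = alpha k * (P (Suc k) * (1 - beta k))"
    by (simp only: mult_ac)
  also have "\<dots> = alpha k * P k"
    by (simp only: P_Suc_mult)
  finally show ?case
    using Suc by simp
qed (simp add: P_def)

lemma alpha_le_1: "alpha k \<le> 1"
  using mult_left_mono[OF one_le_P alpha_nonneg, of k k] alpha_mult_P_le[of k] alpha0 by simp

lemma norm_x_Suc_le:
  assumes "z \<in> X"
  shows "(norm (x (Suc k) - z))\<^sup>2 \<le> (1 - beta k) * (norm (w k - z))\<^sup>2 - 2 * lam k * inner (G z) (y k - z)"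
  unfolding beta_def
  using extragradient_step_contraction[OF X_convex compact_imp_closed[OF X_compact] X_ne
      Om_convex Om_closed X_sub G_lip G_strong c_pos lam_pos lam_L w'_def y_def x_Suc assms] .

lemma norm_w_le:
  assumes "z \<in> X"
  shows "(norm (w k - z))\<^sup>2 \<le> (norm (x k - z))\<^sup>2 + 3 * alpha k * (diameter X)\<^sup>2"
  unfolding w_def using x_in_X assms
  by (intro norm_extrapolation_le alpha_nonneg alpha_le_1 norm_diff_le_diameter) auto

text \<open>Multiplying the one-step contraction by \<open>P (Suc k)\<close> turns its factor \<open>1 - beta k\<close> into
  \<open>P k\<close>, so the potential \<open>P k * (norm (x k - z))\<^sup>2\<close> telescopes; the inertial error
  \<open>3 * alpha k * P k * (diameter X)\<^sup>2\<close> is at most \<open>3 * (diameter X)\<^sup>2\<close> because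
  \<open>alpha k * P k \<le> alpha 0 \<le> 1\<close>.\<close>
lemma potential_le:
  assumes "z \<in> X"
  shows "P k * (norm (x k - z))\<^sup>2 + 2 * (\<Sum>j<k. lam j * p j * inner (G z) (y j - z))
    \<le> (3 * real k + 1) * (diameter X)\<^sup>2"
proof (induction k)
  case 0
  show ?case
    using norm_diff_le_diameter[OF x0 assms] by (simp add: P_def power_mono)
next
  case (Suc k)
  have "P (Suc k) * (norm (x (Suc k) - z))\<^sup>2
      \<le> P (Suc k) * ((1 - beta k) * (norm (w k - z))\<^sup>2 - 2 * lam k * inner (G z) (y k - z))"
    using norm_x_Suc_le[OF assms] P_pos by (intro mult_left_mono) (auto simp: less_imp_le)
  also have "\<dots> = (P (Suc k) * (1 - beta k)) * (norm (w k - z))\<^sup>2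
      - 2 * (lam k * P (Suc k) * inner (G z) (y k - z))"
    by (simp add: algebra_simps)
  also have "\<dots> = P k * (norm (w k - z))\<^sup>2 - 2 * (lam k * p k * inner (G z) (y k - z))"
    unfolding P_Suc_mult by (simp only: P_Suc)
  also have "\<dots> \<le> P k * (norm (x k - z))\<^sup>2 + 3 * (alpha k * P k) * (diameter X)\<^sup>2
      - 2 * (lam k * p k * inner (G z) (y k - z))"
    using mult_left_mono[OF norm_w_le[OF assms, of k] less_imp_le[OF P_pos[of k]]]
    by (simp add: algebra_simps)
  also have "\<dots> \<le> P k * (norm (x k - z))\<^sup>2 + 3 * (diameter X)\<^sup>2
      - 2 * (lam k * p k * inner (G z) (y k - z))"
    using alpha_mult_P_le[of k] alpha0 by (simp add: mult_right_mono)
  finally show ?case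
    using Suc by (simp add: algebra_simps)
qed

lemma weighted_gap_sum_le:
  assumes "z \<in> X"
  shows "2 * (\<Sum>j<k. lam j * p j * inner (G z) (y j - z)) \<le> (3 * real k + 1) * (diameter X)\<^sup>2"
  using potential_le[OF assms, of k] P_pos[of k] by (smt (verit) zero_le_mult_iff zero_le_power2)

lemma one_minus_lam_hi_L_pos: "0 < 1 - lam_hi\<^sup>2 * L\<^sup>2"
  using lam_bounds[of 0] lam_lo_pos lam_hi_L by (intro one_minus_square_L_pos) auto

lemma beta_ge: "inverse (1 / (1 - lam_hi\<^sup>2 * L\<^sup>2) + 1 / (2 * lam_lo * c)) \<le> beta i"
proof -
  have "(lam i)\<^sup>2 * L\<^sup>2 \<le> lam_hi\<^sup>2 * L\<^sup>2"
    using lam_bounds[of i] lam_pos[of i] by (intro mult_right_mono power_mono) auto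
  then have "1 / (1 - (lam i)\<^sup>2 * L\<^sup>2) \<le> 1 / (1 - lam_hi\<^sup>2 * L\<^sup>2)"
    using one_minus_lam_hi_L_pos by (intro divide_left_mono) auto
  moreover have "1 / (2 * lam i * c) \<le> 1 / (2 * lam_lo * c)"
    using lam_bounds[of i] lam_lo_pos c_pos by (intro divide_left_mono) auto
  moreover have "0 < 1 / (1 - (lam i)\<^sup>2 * L\<^sup>2) + 1 / (2 * lam i * c)"
    using beta_pos[of i] unfolding beta_def by simp
  ultimately show ?thesis
    unfolding beta_def by (intro le_imp_inverse_le) auto
qed

lemma p_ge_of_iterations:
  assumes "0 < A"
    and "(1 / (1 - lam_hi\<^sup>2 * L\<^sup>2) + 1 / (2 * lam_lo * c)) * ln A \<le> real (Suc m)"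
  shows "A \<le> p m"
proof -
  define C where "C = 1 / (1 - lam_hi\<^sup>2 * L\<^sup>2) + 1 / (2 * lam_lo * c)"
  have "0 < C"
    unfolding C_def using one_minus_lam_hi_L_pos lam_lo_pos c_pos by (intro add_pos_pos) auto
  have "(\<Prod>i\<le>m. 1 - beta i) \<le> exp (- inverse C * card {..m})"
    using beta_ge beta_lt_1 unfolding C_def by (intro prod_one_minus_le_exp) (auto simp: less_imp_le)
  also have "\<dots> = inverse (exp (real (Suc m) / C))"
    by (simp add: exp_minus divide_inverse mult.commute)
  finally have "exp (real (Suc m) / C) \<le> p m"
    unfolding p_def using le_imp_inverse_le prod_one_minus_beta_pos by fastforce
  moreover have "ln A \<le> real (Suc m) / C"
    using assms(2) \<open>0 < C\<close> unfolding C_def[symmetric] by (simp add: pos_le_divide_eq mult.commute)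
  then have "A \<le> exp (real (Suc m) / C)"
    using \<open>0 < A\<close> by (metis exp_le_cancel_iff exp_ln)
  ultimately show ?thesis
    by linarith
qed

lemma c_le_L:
  assumes "u \<in> X" "v \<in> X" "u \<noteq> v"
  shows "c \<le> L"
  using strongly_monotone_op_le_lipschitz[OF G_strong lipschitz_on_subset[OF G_lip X_sub] assms] .

text \<open>The hypothesis forces \<open>beta j < 2/3\<close>.\<close>
lemma p_Suc_le:
  assumes "c \<le> L"
  shows "p (Suc j) \<le> 3 * p j"
proof -
  have "lam (Suc j) * c \<le> lam (Suc j) * L"
    using assms lam_pos[of "Suc j"] by (simp add: mult_left_mono)
  then have "lam (Suc j) * c < 1"
    using lam_L[of "Suc j"] by linarith
  then have "1 / 2 < 1 / (2 * lam (Suc j) * c)"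
    using lam_pos[of "Suc j"] c_pos by (simp add: field_simps)
  then have "3 / 2 < 1 / (1 - (lam (Suc j))\<^sup>2 * L\<^sup>2) + 1 / (2 * lam (Suc j) * c)"
    using one_le_inverse_one_minus_lam_L[of "Suc j"] by linarith
  then have "beta (Suc j) < inverse (3 / 2)"
    unfolding beta_def by (intro less_imp_inverse_less) auto
  then have "p (Suc j) * (1 / 3) \<le> p (Suc j) * (1 - beta (Suc j))"
    using p_pos[of "Suc j"] by (intro mult_left_mono) auto
  also have "\<dots> = p j"
    using P_Suc_mult[of "Suc j"] by (simp only: P_Suc)
  finally show ?thesis
    by simp
qed

lemma weights_sum_ge:
  assumes "0 < \<tau>" "0 < diameter X"
    and iterations: "(1 / (1 - lam_hi\<^sup>2 * L\<^sup>2) + 1 / (2 * lam_lo * c))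
        * ln ((real (Suc m) + 1) * (diameter X)\<^sup>2 / (lam_lo * \<tau>)) \<le> real (Suc m)"
  shows "(3 * real (Suc m) + 1) * (diameter X)\<^sup>2 \<le> 2 * \<tau> * (\<Sum>j<Suc m. lam j * p j)"
proof -
  define A where "A = (real (Suc m) + 1) * (diameter X)\<^sup>2 / (lam_lo * \<tau>)"
  have "0 < A"
    unfolding A_def using assms lam_lo_pos by simp
  then have "A \<le> p m"
    using iterations unfolding A_def[symmetric] by (rule p_ge_of_iterations)
  have "\<tau> * lam_lo * A = (real (Suc m) + 1) * (diameter X)\<^sup>2"
    unfolding A_def using \<open>0 < \<tau>\<close> lam_lo_pos by simp
  obtain u v where "u \<in> X" "v \<in> X" "dist u v = diameter X"
    using diameter_compact_attained[OF X_compact X_ne] by blast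
  then have "c \<le> L"
    using c_le_L \<open>0 < diameter X\<close> by fastforce
  have "(3 * real (Suc m) + 1) * (diameter X)\<^sup>2 \<le> (3 - 1 / real (Suc m)) * (real (Suc m) + 1) * (diameter X)\<^sup>2"
    by (intro mult_right_mono) (auto simp: field_simps)
  also have "\<dots> = (3 - 1 / real (Suc m)) * (\<tau> * lam_lo * A)"
    unfolding \<open>\<tau> * lam_lo * A = (real (Suc m) + 1) * (diameter X)\<^sup>2\<close> by (simp only: mult.assoc)
  also have "\<dots> \<le> (3 - 1 / real (Suc m)) * (\<tau> * lam_lo * p m)"
    using \<open>A \<le> p m\<close> \<open>0 < \<tau>\<close> lam_lo_pos by (intro mult_left_mono) (auto simp: field_simps)
  also have "\<dots> = \<tau> * lam_lo * ((3 - 1 / real (Suc m)) * p m)"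
    by (simp only: mult_ac)
  also have "\<dots> \<le> \<tau> * lam_lo * (2 * (\<Sum>j<Suc m. p j))"
    using sum_ge_of_ratio_le_3[where q = p, OF p_pos p_Suc_le[OF \<open>c \<le> L\<close>]] \<open>0 < \<tau>\<close> lam_lo_pos
    by (intro mult_left_mono) auto
  also have "\<dots> = 2 * \<tau> * (\<Sum>j<Suc m. lam_lo * p j)"
    unfolding sum_distrib_left[symmetric] by (simp only: mult_ac)
  also have "\<dots> \<le> 2 * \<tau> * (\<Sum>j<Suc m. lam j * p j)"
    using lam_bounds p_pos \<open>0 < \<tau>\<close> by (intro mult_left_mono sum_mono mult_right_mono) (auto simp: less_imp_le)
  finally show ?thesis .
qed

lemma ybar_approx_solution:
  assumes "0 < \<tau>" "1 \<le> k"
    and iterations: "\<lceil>(1 / (1 - lam_hi\<^sup>2 * L\<^sup>2) + 1 / (2 * lam_lo * c))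
        * ln ((real k + 1) * (diameter X)\<^sup>2 / (lam_lo * \<tau>))\<rceil> \<le> int k"
  shows "ybar k \<in> X \<and> (\<forall>z\<in>X. inner (G z) (ybar k - z) \<le> \<tau>)"
proof -
  obtain m where k: "k = Suc m"
    using \<open>1 \<le> k\<close> by (cases k) auto
  have weights_pos: "0 < (\<Sum>j<k. lam j * p j)"
    using k lam_pos p_pos by (intro sum_pos) auto
  have "ybar k \<in> X"
    unfolding ybar_def using weights_pos y_in_X lam_pos p_pos
    by (intro weighted_mean_in_convex[OF X_convex]) (auto intro: less_imp_le)
  moreover have "inner (G z) (ybar k - z) \<le> \<tau>" if "z \<in> X" for z
  proof -
    have "2 * ((\<Sum>j<k. lam j * p j) * inner (G z) (ybar k - z))
        = 2 * (\<Sum>j<k. lam j * p j * inner (G z) (y j - z))"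
      unfolding ybar_def using weights_pos by (subst inner_weighted_mean_diff) auto
    also have "\<dots> \<le> (3 * real k + 1) * (diameter X)\<^sup>2"
      using weighted_gap_sum_le[OF that] .
    also have "\<dots> \<le> 2 * \<tau> * (\<Sum>j<k. lam j * p j)"
    proof (cases "diameter X = 0")
      case True
      then show ?thesis
        using \<open>0 < \<tau>\<close> weights_pos by simp
    next
      case False
      then have "0 < diameter X"
        using diameter_ge_0[OF compact_imp_bounded[OF X_compact]] by simp
      then show ?thesis
        using iterations unfolding k ceiling_le_iff
        by (intro weights_sum_ge[OF \<open>0 < \<tau>\<close>]) auto
    qed
    finally show ?thesis
      using weights_pos by (simp add: mult.commute)
  qed
  ultimately show ?thesis
    by blast
qed

end

theorem theorem4p20:
  fixes F H :: "'a::euclidean_space \<Rightarrow> 'a"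
    and DF DH X \<Omega> :: "'a set"
    and LF LH \<mu> \<epsilon> D0 \<eta> lam_lo lam_hi :: real
    and lam alpha :: "nat \<Rightarrow> real"
    and x w w' y :: "nat \<Rightarrow> 'a"
  assumes F_mono: "monotone_op F DF" and F_lip: "LF-lipschitz_on DF F" and LF_pos: "LF > 0"
    and H_mono: "monotone_op H DH" and H_lip: "LH-lipschitz_on DH H" and LH_pos: "LH > 0"
    and H_strong: "strongly_monotone_op \<mu> H DH" and mu_pos: "\<mu> > 0"
    and X_ne: "X \<noteq> {}" and X_compact: "compact X" and X_convex: "convex X"
    and Om_ne: "\<Omega> \<noteq> {}" and Om_closed: "closed \<Omega>" and Om_convex: "convex \<Omega>"
    and X_sub: "X \<subseteq> \<Omega>" and Om_sub: "\<Omega> \<subseteq> DF \<inter> DH"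
    and Q_ne: "VI_sol F X \<noteq> {}"
    and eps_pos: "\<epsilon> > 0"
    and D0_gt: "D0 > \<epsilon>"
    and D0_ge: "D0 \<ge> lam_hi * (SUP z\<in>X. norm (H z)) * diameter X / lam_lo"
    and eta_def: "\<eta> = \<epsilon> / (2 * D0)"
    and lam_bounds: "\<And>k. lam_lo \<le> lam k \<and> lam k \<le> lam_hi"
    and lam_l_pos: "0 < lam_lo" and lam_lu: "lam_lo \<le> lam_hi" and lam_u: "lam_hi < 1 / (LF + \<eta> * LH)"
    and alpha_nonneg: "\<And>k. alpha k \<ge> 0"
    and alpha0: "alpha 0 \<le> 1"
    and alpha_dec: "\<And>k. alpha (Suc k) \<le>
          (1 - inverse (1 / (1 - (lam k)\<^sup>2 * (LF + \<eta> * LH)\<^sup>2) + 1 / (2 * lam k * \<eta> * \<mu>))) * alpha k"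
    and x0: "x 0 \<in> X"
    and w_def: "\<And>k. w k = x k + alpha k *\<^sub>R (x k - (if k = 0 then x 0 else x (k - 1)))"
    and w'_def: "\<And>k. w' k = closest_point \<Omega> (w k)"
    and y_def: "\<And>k. y k = closest_point X (w k - lam k *\<^sub>R (F (w' k) + \<eta> *\<^sub>R H (w' k)))"
    and x_def: "\<And>k. x (Suc k) = closest_point X (w k - lam k *\<^sub>R (F (y k) + \<eta> *\<^sub>R H (y k)))"
  shows
    "let L = LF + \<eta> * LH;
         Q = VI_sol F X;
         DX = diameter X;
         BH = (SUP z\<in>Q. norm (H z));
         beta = (%k. inverse (1 / (1 - (lam k)\<^sup>2 * L\<^sup>2) + 1 / (2 * lam k * \<eta> * \<mu>)));
         p = (%k. inverse (\<Prod>i\<le>k. (1 - beta i)));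
         Lam = (%k. \<Sum>j<k. lam j * \<eta> * p j);
         ybar = (%k. inverse (Lam k) *\<^sub>R (\<Sum>j<k. (lam j * \<eta> * p j) *\<^sub>R y j))
     in \<forall>k\<ge>1. int k \<ge> \<lceil>(1 / (1 - lam_hi\<^sup>2 * L\<^sup>2) + D0 / (lam_lo * \<mu> * \<epsilon>))
                          * ln (2 * (real k + 1) * DX\<^sup>2 * D0 / (lam_lo * \<epsilon>\<^sup>2))\<rceil> \<longrightarrow>
          (- BH * infdist (ybar k) Q \<le> Gap (ybar k) H Q \<and> Gap (ybar k) H Q \<le> \<epsilon>
           \<and> 0 \<le> Gap (ybar k) F X \<and> Gap (ybar k) F X \<le> \<epsilon>
           \<and> (\<forall>\<sigma> M. \<sigma> > 0 \<and> M \<ge> 1 \<and> weakly_sharp \<sigma> M F X Q \<longrightarrow>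
                 Gap (ybar k) H Q \<ge> - (BH / \<sigma> powr (1 / M)) * \<epsilon> powr (1 / M)))"
proof -
  have "0 < D0" "0 < \<eta>"
    using eps_pos D0_gt eta_def by auto
  interpret inertial_extragradient "\<lambda>z. F z + \<eta> *\<^sub>R H z" X \<Omega> "LF + \<eta> * LH" "\<eta> * \<mu>" lam_lo lam_hi
    lam alpha x w w' y
  proof
    show "(LF + \<eta> * LH)-lipschitz_on \<Omega> (\<lambda>z. F z + \<eta> *\<^sub>R H z)"
      using lipschitz_on_subset[OF F_lip] lipschitz_on_subset[OF H_lip] Om_sub \<open>0 < \<eta>\<close>
      by (intro lipschitz_on_add lipschitz_on_cmult_nonneg) auto
    show "strongly_monotone_op (\<eta> * \<mu>) (\<lambda>z. F z + \<eta> *\<^sub>R H z) X"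
      using X_sub Om_sub \<open>0 < \<eta>\<close>
      by (intro strongly_monotone_op_add_scaleR monotone_op_subset[OF F_mono]
          strongly_monotone_op_subset[OF H_strong]) auto
    show "lam_hi * (LF + \<eta> * LH) < 1"
      using lam_u LF_pos LH_pos \<open>0 < \<eta>\<close> by (simp add: field_simps add_pos_pos)
    show "0 < \<eta> * \<mu>"
      using \<open>0 < \<eta>\<close> mu_pos by simp
    show "alpha (Suc k) \<le> (1 - inverse (1 / (1 - (lam k)\<^sup>2 * (LF + \<eta> * LH)\<^sup>2)
        + 1 / (2 * lam k * (\<eta> * \<mu>)))) * alpha k" for k
      using alpha_dec[of k] by (simp only: mult.assoc)
  qed (fact X_ne X_compact X_convex Om_closed Om_convex X_sub lam_bounds lam_l_pos alpha_nonneg alpha0 x0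
      w_def w'_def y_def x_def)+
  have H_bounded: "bounded (H ` X)"
    using X_sub Om_sub
    by (intro compact_imp_bounded compact_continuous_image[OF _ X_compact]
        continuous_on_subset[OF lipschitz_on_continuous_on[OF H_lip]]) auto
  have "0 \<le> (SUP z\<in>X. norm (H z)) * diameter X"
    using X_ne H_bounded bdd_above_norm[of "H ` X"] diameter_ge_0[OF compact_imp_bounded[OF X_compact]]
    by (intro mult_nonneg_nonneg) (auto simp: image_comp intro: cSUP_upper2)
  moreover have "1 \<le> lam_hi / lam_lo"
    using lam_l_pos lam_lu by simp
  ultimately have "(SUP z\<in>X. norm (H z)) * diameter X \<le> (lam_hi / lam_lo) * ((SUP z\<in>X. norm (H z)) * diameter X)"
    using mult_right_mono[of 1 "lam_hi / lam_lo"] by simp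
  also have "\<dots> \<le> D0"
    using D0_ge by (simp add: mult.assoc)
  finally have H_diam: "(SUP z\<in>X. norm (H z)) * diameter X \<le> D0" .
  have p_eq: "inverse (\<Prod>i\<le>k. 1 - inverse (1 / (1 - (lam i)\<^sup>2 * (LF + \<eta> * LH)\<^sup>2)
      + 1 / (2 * lam i * \<eta> * \<mu>))) = p k" for k
    unfolding p_def beta_def by (simp only: mult.assoc)
  have ybar_eq: "inverse (\<Sum>j<k. lam j * \<eta> * p j) *\<^sub>R (\<Sum>j<k. (lam j * \<eta> * p j) *\<^sub>R y j) = ybar k" for k
    unfolding ybar_def using weighted_mean_scale[of \<eta> "\<lambda>j. lam j * p j" "{..<k}" y] \<open>0 < \<eta>\<close>
    by (simp add: mult_ac)
  have C_eq: "D0 / (lam_lo * \<mu> * \<epsilon>) = 1 / (2 * lam_lo * (\<eta> * \<mu>))"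
    using eta_def \<open>0 < D0\<close> lam_l_pos mu_pos eps_pos by simp
  have A_eq: "2 * (real k + 1) * (diameter X)\<^sup>2 * D0 / (lam_lo * \<epsilon>\<^sup>2)
      = (real k + 1) * (diameter X)\<^sup>2 / (lam_lo * (\<eta> * \<epsilon>))" for k
    using eta_def \<open>0 < D0\<close> eps_pos by (simp add: power2_eq_square)
  show ?thesis
    unfolding Let_def p_eq ybar_eq C_eq A_eq
  proof (intro allI impI, goal_cases)
    case (1 k)
    from ybar_approx_solution[OF mult_pos_pos[OF \<open>0 < \<eta>\<close> eps_pos] 1]
    show ?case
      by (intro regularized_solution_gap_bounds[OF _ compact_imp_bounded[OF X_compact] H_bounded Q_ne H_diam
            eps_pos D0_gt eta_def]) auto
  qed
qed

end
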